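(* Let $J\subseteq\mathbb{R}$ be an interval, let $f$ be ordinal decreasing on $J$, and let $J_1,J_2$ be a partition of $J$ into two intervals with $J_1$ to the left of $J_2$. Then $o(f|_J)\le o(f|_{J_1})+o(f|_{J_2})$ (ordinal addition).
   Context: For $h:E\to\mathbb{R}$, a strictly decreasing sequence $x_1>x_2>\cdots$ in $E$ is $h$-bad if $h(x_1)>h(x_2)>\cdots$; $h$ is ordinal decreasing if there is no infinite $h$-bad sequence. For ordinal decreasing $h$, the tree $T_h$ has a vertex for each finite $h$-bad sequence (the empty sequence being the root), the parent of $\langle x_1>\cdots>x_n\rangle$ being $\langle x_1>\cdots>x_{n-1}\rangle$; each vertex gets the ordinal height $o(v)=\sup_{w\text{ child of }v}(o(w)+1)$, and $o(h)$ is the height of the root. $o(f|_D)$ denotes the ordinal type of the restriction of $f$ to $D$. *)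

theory Defs
  imports "HOL-Analysis.Analysis"
begin

definition bad_seq :: "(real \<Rightarrow> real) \<Rightarrow> real set \<Rightarrow> real list \<Rightarrow> bool" where
  "bad_seq h E xs \<longleftrightarrow> set xs \<subseteq> E \<and> sorted_wrt (\<lambda>a b. a > b) xs
      \<and> sorted_wrt (\<lambda>a b. h a > h b) xs"

definition ordinal_decreasing :: "(real \<Rightarrow> real) \<Rightarrow> real set \<Rightarrow> bool" where
  "ordinal_decreasing h E \<longleftrightarrow>
     \<not> (\<exists>x :: nat \<Rightarrow> real. \<forall>n. x n \<in> E \<and> x (Suc n) < x n \<and> h (x (Suc n)) < h (x n))"

definition tree_child :: "(real \<Rightarrow> real) \<Rightarrow> real set \<Rightarrow> (real list \<times> real list) set" where
  "tree_child h E = {(xs @ [y], xs) | xs y. bad_seq h E (xs @ [y])}"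

text \<open>Ambient well-order in which ordinal heights are computed: the successor cardinal
  of the continuum (as a well-order); every height of such a tree lies strictly below it.\<close>
definition height_ambient :: "real list set rel" where
  "height_ambient = cardSuc (card_of (UNIV :: real list set))"

text \<open>o(v) = sup over children w of (o(w)+1), i.e. the least ordinal strictly above all o(w).\<close>
definition vertex_height :: "(real \<Rightarrow> real) \<Rightarrow> real set \<Rightarrow> real list \<Rightarrow> real list set" where
  "vertex_height h E = wfrec (tree_child h E)
     (\<lambda>rk v. wo_rel.minim height_ambient
        {a \<in> Field height_ambient. \<forall>w. (w, v) \<in> tree_child h E \<longrightarrow>
            (rk w, a) \<in> height_ambient \<and> rk w \<noteq> a})"

text \<open>o(h|_E) as a well-order (the ordinal of all ambient elements below the root height).\<close>
definition ord_type :: "(real \<Rightarrow> real) \<Rightarrow> real set \<Rightarrow> real list set rel" where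
  "ord_type h E = Restr height_ambient (underS height_ambient (vertex_height h E []))"

definition ord_sum :: "'a rel \<Rightarrow> 'b rel \<Rightarrow> ('a + 'b) rel" where
  "ord_sum r s = map_prod Inl Inl ` r \<union> map_prod Inr Inr ` s
     \<union> {(Inl a, Inr b) | a b. a \<in> Field r \<and> b \<in> Field s}"

end

theory Submission
  imports Defs
begin

text \<open>Send a nonempty f-bad sequence v in J to the ordinal sum o(f|J1) + o(f|J2): if v meets J1,
  to the height of its J1-part in the tree of f|J1 (first summand), otherwise to its own height in
  the tree of f|J2 (second summand). Appending y to v makes this value drop: if y \<in> J1, the
  J1-part grows by y (or first becomes nonempty, which moves the value into the first summand);
  if y \<in> J2, then v, lying above y, lies entirely in J2 and grows in the tree of f|J2. A map into a
  well-order that strictly decreases along the edges of T_f bounds the height of the root.\<close>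

unbundle cardinal_syntax

abbreviation init_seg :: "'a rel \<Rightarrow> 'a \<Rightarrow> 'a rel" where
  "init_seg W a \<equiv> Restr W (underS W a)"

subsection \<open>Initial segments of a well-order\<close>

lemma init_seg_Well_order: "Well_order W \<Longrightarrow> Well_order (init_seg W a)"
  by (rule Well_order_Restr)

lemma Field_init_seg: "Well_order W \<Longrightarrow> Field (init_seg W a) = underS W a"
  by (simp add: Field_Restr_ofilter wo_rel.underS_ofilter wo_rel_def)

lemma underS_init_seg:
  assumes "Well_order W" and "b \<in> underS W a"
  shows "underS (init_seg W a) b = underS W b"
proof -
  have "trans W" "antisym W"
    using assms(1) by (auto simp: order_on_defs)
  with assms(2) show ?thesis
    unfolding underS_def by (auto dest: transD antisymD)
qed

lemma init_seg_init_seg: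
  assumes "Well_order W" and "b \<in> underS W a"
  shows "init_seg (init_seg W a) b = init_seg W b"
proof -
  have "underS W b \<subseteq> underS W a"
    using assms underS_incr[of W b a] by (auto simp: order_on_defs underS_def)
  then show ?thesis
    using underS_init_seg[OF assms] by auto
qed

lemma init_seg_ordLeq_mono:
  assumes "Well_order W" and "(a, b) \<in> W"
  shows "init_seg W a \<le>o init_seg W b"
proof -
  have "underS W a \<subseteq> underS W b"
    using assms by (intro underS_incr) (auto simp: order_on_defs)
  then show ?thesis
    using assms(1) by (intro ofilter_subset_ordLeq[THEN iffD1])
      (auto simp: wo_rel.underS_ofilter wo_rel_def)
qed

lemma init_seg_ordLess_mono:
  assumes "Well_order W" and "a \<in> underS W b"
  shows "init_seg W a <o init_seg W b"
proof -
  have "underS W a \<subseteq> underS W b"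
    using assms by (intro underS_incr) (auto simp: order_on_defs underS_def)
  moreover have "a \<in> underS W b - underS W a"
    using assms(2) by (simp add: underS_def)
  ultimately show ?thesis
    using assms(1) by (intro ofilter_subset_ordLess[THEN iffD1])
      (auto simp: wo_rel.underS_ofilter wo_rel_def)
qed

subsection \<open>Heights in the ambient well-order\<close>

lemma Card_order_height_ambient: "Card_order height_ambient"
  unfolding height_ambient_def by (simp add: cardSuc_Card_order card_of_Card_order)

lemma Well_order_height_ambient: "Well_order height_ambient"
  using Card_order_height_ambient card_order_on_well_order_on by blast

lemma wo_rel_height_ambient: "wo_rel height_ambient"
  using Well_order_height_ambient wo_rel_def by blast

lemma infinite_Field_height_ambient: "infinite (Field height_ambient)"
  unfolding height_ambient_def
  using cardSuc_finite[OF card_of_Card_order, of "UNIV :: real list set"]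
  by (simp add: Field_card_of infinite_UNIV_listI)

lemma height_ambient_strict_upper_bound:
  assumes "B \<subseteq> Field height_ambient" and "|B| \<le>o |UNIV :: real list set|"
  shows "\<exists>j\<in>Field height_ambient. B \<subseteq> underS height_ambient j"
proof -
  have chain: "relChain height_ambient (under height_ambient)"
    unfolding relChain_def under_def using wo_rel_height_ambient
    by (auto dest: wo_rel.TRANS[THEN transD])
  have cover: "B \<subseteq> (\<Union>i\<in>Field height_ambient. under height_ambient i)"
    using assms(1) wo_rel.REFL[OF wo_rel_height_ambient] by (auto simp: under_def refl_on_def)
  obtain i where i: "i \<in> Field height_ambient" "B \<subseteq> under height_ambient i"
    using cardSuc_UNION[OF card_of_Card_order _ chain[unfolded height_ambient_def]
        cover[unfolded height_ambient_def] assms(2)]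
    by (auto simp: Field_card_of infinite_UNIV_listI height_ambient_def)
  obtain j where j: "j \<in> Field height_ambient" "i \<in> underS height_ambient j"
    using infinite_Card_order_limit[OF Card_order_height_ambient
        infinite_Field_height_ambient i(1)]
    by (auto simp: underS_def)
  have "under height_ambient i \<subseteq> underS height_ambient j"
    using j(2) wo_rel.TRANS[OF wo_rel_height_ambient] wo_rel.ANTISYM[OF wo_rel_height_ambient]
    unfolding under_def underS_def by (auto dest: transD antisymD)
  then show ?thesis
    using i(2) j(1) by blast
qed

text \<open>The recursion equation of vertex_height, abstracted over the child relation.\<close>

definition is_height_function :: "real list rel \<Rightarrow> (real list \<Rightarrow> real list set) \<Rightarrow> bool" where
  "is_height_function R rk \<longleftrightarrow> (\<forall>v. rk v = wo_rel.minim height_ambient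
     {a \<in> Field height_ambient. \<forall>w. (w, v) \<in> R \<longrightarrow>
        (rk w, a) \<in> height_ambient \<and> rk w \<noteq> a})"

lemma height_function_underS:
  assumes "wf R" and rk: "is_height_function R rk"
  shows "rk v \<in> Field height_ambient \<and> (\<forall>w. (w, v) \<in> R \<longrightarrow> rk w \<in> underS height_ambient (rk v))"
  using assms(1)
proof (induction v rule: wf_induct_rule)
  case (less v)
  let ?S = "{a \<in> Field height_ambient. \<forall>w. (w, v) \<in> R \<longrightarrow>
     (rk w, a) \<in> height_ambient \<and> rk w \<noteq> a}"
  have "|rk ` {w. (w, v) \<in> R}| \<le>o |UNIV :: real list set|"
    using card_of_image card_of_mono1[OF subset_UNIV] ordLeq_transitive by blast
  moreover have "rk ` {w. (w, v) \<in> R} \<subseteq> Field height_ambient"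
    using less by auto
  ultimately obtain j where
    "j \<in> Field height_ambient" "rk ` {w. (w, v) \<in> R} \<subseteq> underS height_ambient j"
    using height_ambient_strict_upper_bound by blast
  then have "j \<in> ?S"
    by (auto simp: underS_def)
  moreover have "rk v = wo_rel.minim height_ambient ?S"
    using rk unfolding is_height_function_def by blast
  ultimately have "rk v \<in> ?S"
    using wo_rel.minim_in[OF wo_rel_height_ambient, of ?S] by auto
  then show ?case
    by (auto simp: underS_def)
qed

lemma height_function_underS_child:
  assumes "wf R" and rk: "is_height_function R rk" and g: "g \<in> underS height_ambient (rk v)"
  shows "\<exists>w. (w, v) \<in> R \<and> (g, rk w) \<in> height_ambient"
proof (rule ccontr)
  have gF: "g \<in> Field height_ambient"
    using g by (auto simp: underS_def Field_def)
  assume "\<nexists>w. (w, v) \<in> R \<and> (g, rk w) \<in> height_ambient"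
  moreover have "rk w \<in> Field height_ambient" if "(w, v) \<in> R" for w
    using height_function_underS[OF assms(1,2)] that by (auto simp: underS_def Field_def)
  ultimately have "\<forall>w. (w, v) \<in> R \<longrightarrow> (rk w, g) \<in> height_ambient \<and> rk w \<noteq> g"
    using gF wo_rel.TOTALS[OF wo_rel_height_ambient] wo_rel.REFL[OF wo_rel_height_ambient] by (metis refl_onD)
  moreover have "rk v = wo_rel.minim height_ambient
      {a \<in> Field height_ambient. \<forall>w. (w, v) \<in> R \<longrightarrow> (rk w, a) \<in> height_ambient \<and> rk w \<noteq> a}"
    using rk unfolding is_height_function_def by blast
  ultimately have "(rk v, g) \<in> height_ambient"
    using gF wo_rel.minim_least[OF wo_rel_height_ambient] by auto
  then show False
    using g wo_rel.ANTISYM[OF wo_rel_height_ambient] by (auto simp: underS_def dest: antisymD)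
qed

lemma height_function_init_seg_ordLeq:
  fixes R :: "real list rel" and Q :: "real list \<Rightarrow> 'b rel"
  assumes "wf R" and rk: "is_height_function R rk"
    and Q: "\<And>v. Well_order (Q v)" "\<And>w v. (w, v) \<in> R \<Longrightarrow> Q w <o Q v"
  shows "init_seg height_ambient (rk v) \<le>o Q v"
  using assms(1)
proof (induction v rule: wf_induct_rule)
  case (less v)
  have "init_seg (init_seg height_ambient (rk v)) g <o Q v"
    if "g \<in> Field (init_seg height_ambient (rk v))" for g
  proof -
    have g: "g \<in> underS height_ambient (rk v)"
      using that by (simp add: Field_init_seg Well_order_height_ambient)
    obtain w where w: "(w, v) \<in> R" "(g, rk w) \<in> height_ambient"
      using height_function_underS_child[OF assms(1) rk g] by blast
    have "init_seg (init_seg height_ambient (rk v)) g = init_seg height_ambient g"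
      using init_seg_init_seg[OF Well_order_height_ambient g] .
    also have "init_seg height_ambient g \<le>o init_seg height_ambient (rk w)"
      using init_seg_ordLeq_mono[OF Well_order_height_ambient w(2)] .
    also have "init_seg height_ambient (rk w) \<le>o Q w"
      using less w(1) by blast
    also have "Q w <o Q v"
      using Q(2) w(1) .
    finally show ?thesis .
  qed
  then show ?case
    using ordLeq_iff_ordLess_Restr[OF init_seg_Well_order[OF Well_order_height_ambient] Q(1)]
    by blast
qed

subsection \<open>The tree of bad sequences\<close>

lemma bad_seq_appendD: "bad_seq h E (xs @ ys) \<Longrightarrow> bad_seq h E xs"
  unfolding bad_seq_def by (auto simp: sorted_wrt_append)

lemma bad_seq_Un_filter: "bad_seq h (A \<union> B) xs \<Longrightarrow> bad_seq h A (filter (\<lambda>x. x \<in> A) xs)"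
  unfolding bad_seq_def by (auto simp: sorted_wrt_filter)

lemma bad_seq_Un_filter_Nil:
  "bad_seq h (A \<union> B) xs \<Longrightarrow> filter (\<lambda>x. x \<in> A) xs = [] \<Longrightarrow> bad_seq h B xs"
  unfolding bad_seq_def filter_empty_conv by blast

lemma ordinal_decreasing_subset:
  "ordinal_decreasing h E \<Longrightarrow> E' \<subseteq> E \<Longrightarrow> ordinal_decreasing h E'"
  unfolding ordinal_decreasing_def by blast

lemma tree_child_iff: "(w, v) \<in> tree_child h E \<longleftrightarrow> (\<exists>y. w = v @ [y] \<and> bad_seq h E (v @ [y]))"
  unfolding tree_child_def by auto

lemma wf_tree_child:
  assumes "ordinal_decreasing h E"
  shows "wf (tree_child h E)"
proof (rule ccontr)
  assume "\<not> wf (tree_child h E)"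
  then obtain g where g: "\<And>i. (g (Suc i), g i) \<in> tree_child h E"
    unfolding wf_iff_no_infinite_down_chain by blast
  define x where "x n = last (g (Suc n))" for n
  have g_Suc: "g (Suc n) = g n @ [x n] \<and> bad_seq h E (g n @ [x n])" for n
    using g[of n] unfolding tree_child_iff x_def by auto
  have "x n \<in> E \<and> x (Suc n) < x n \<and> h (x (Suc n)) < h (x n)" for n
  proof -
    have "bad_seq h E (g n @ [x n] @ [x (Suc n)])"
      using g_Suc[of "Suc n"] g_Suc[of n] by simp
    then show ?thesis
      unfolding bad_seq_def by (auto simp: sorted_wrt_append)
  qed
  then show False
    using assms unfolding ordinal_decreasing_def by blast
qed

lemma vertex_height_is_height_function:
  assumes "ordinal_decreasing h E"
  shows "is_height_function (tree_child h E) (vertex_height h E)"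
  unfolding is_height_function_def vertex_height_def
  by (subst wfrec[OF wf_tree_child[OF assms]]) (simp add: cut_apply)

lemma vertex_height_child_underS:
  assumes "ordinal_decreasing h E" and "bad_seq h E (v @ [y])"
  shows "vertex_height h E (v @ [y]) \<in> underS height_ambient (vertex_height h E v)"
  using height_function_underS[OF wf_tree_child vertex_height_is_height_function, OF assms(1,1)]
    assms(2) by (auto simp: tree_child_iff)

lemma vertex_height_underS_root:
  assumes od: "ordinal_decreasing h E"
  shows "bad_seq h E xs \<Longrightarrow> xs \<noteq> [] \<Longrightarrow>
    vertex_height h E xs \<in> underS height_ambient (vertex_height h E [])"
proof (induction xs rule: rev_induct)
  case Nil
  then show ?case by simp
next
  case (snoc y ys)
  have child: "vertex_height h E (ys @ [y]) \<in> underS height_ambient (vertex_height h E ys)"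
    using vertex_height_child_underS[OF od snoc.prems(1)] .
  show ?case
  proof (cases "ys = []")
    case True
    then show ?thesis using child by simp
  next
    case False
    then have "vertex_height h E ys \<in> underS height_ambient (vertex_height h E [])"
      using snoc.IH bad_seq_appendD snoc.prems(1) by blast
    then show ?thesis
      using child underS_incr[of height_ambient] Well_order_height_ambient
      by (auto simp: order_on_defs underS_def)
  qed
qed

lemma Well_order_ord_type: "Well_order (ord_type h E)"
  unfolding ord_type_def by (rule init_seg_Well_order[OF Well_order_height_ambient])

lemma Field_ord_type: "Field (ord_type h E) = underS height_ambient (vertex_height h E [])"
  unfolding ord_type_def by (rule Field_init_seg[OF Well_order_height_ambient])

lemma underS_ord_type:
  "b \<in> Field (ord_type h E) \<Longrightarrow> underS (ord_type h E) b = underS height_ambient b"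
  by (simp add: ord_type_def Field_init_seg underS_init_seg Well_order_height_ambient)

text \<open>Compare each vertex v with the initial segment of W below \<phi> v.\<close>

lemma ord_type_ordLeq_if_descending_map:
  assumes od: "ordinal_decreasing h E" and W: "Well_order W"
    and \<phi>_Field: "\<And>v. bad_seq h E v \<Longrightarrow> v \<noteq> [] \<Longrightarrow> \<phi> v \<in> Field W"
    and \<phi>_desc: "\<And>v y. bad_seq h E (v @ [y]) \<Longrightarrow> v \<noteq> [] \<Longrightarrow> \<phi> (v @ [y]) \<in> underS W (\<phi> v)"
  shows "ord_type h E \<le>o W"
proof -
  define Q where "Q v = (if v = [] then W else init_seg W (\<phi> v))" for v
  have "Q w <o Q v" if edge: "(w, v) \<in> tree_child h E" for w v
  proof -
    obtain y where y: "w = v @ [y]" "bad_seq h E (v @ [y])"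
      using edge by (auto simp: tree_child_iff)
    show ?thesis
    proof (cases "v = []")
      case True
      then show ?thesis
        using y \<phi>_Field[of "[y]"] underS_Restr_ordLess[OF W] by (auto simp: Q_def)
    next
      case False
      then show ?thesis
        using y \<phi>_desc init_seg_ordLess_mono[OF W] by (simp add: Q_def)
    qed
  qed
  moreover have "Well_order (Q v)" for v
    using W init_seg_Well_order[OF W] by (simp add: Q_def)
  ultimately have "init_seg height_ambient (vertex_height h E []) \<le>o Q []"
    using height_function_init_seg_ordLeq[OF wf_tree_child vertex_height_is_height_function]
      od by blast
  then show ?thesis
    by (simp add: Q_def ord_type_def)
qed

subsection \<open>Ordinal sums\<close>

lemma in_ord_sum_iff [simp]:
  "(Inl a, Inl b) \<in> ord_sum r s \<longleftrightarrow> (a, b) \<in> r"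
  "(Inr c, Inr d) \<in> ord_sum r s \<longleftrightarrow> (c, d) \<in> s"
  "(Inl a, Inr d) \<in> ord_sum r s \<longleftrightarrow> a \<in> Field r \<and> d \<in> Field s"
  "(Inr c, Inl b) \<notin> ord_sum r s"
  unfolding ord_sum_def by auto

lemma Field_ord_sum: "Field (ord_sum r s) = Inl ` Field r \<union> Inr ` Field s"
  unfolding ord_sum_def Field_def by force

lemma in_Field_ord_sum_iff [simp]:
  "Inl a \<in> Field (ord_sum r s) \<longleftrightarrow> a \<in> Field r"
  "Inr b \<in> Field (ord_sum r s) \<longleftrightarrow> b \<in> Field s"
  by (auto simp: Field_ord_sum)

lemma wf_ord_sum_Id:
  assumes "wf (r - Id)" and "wf (s - Id)"
  shows "wf (ord_sum r s - Id)"
proof -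
  let ?L = "map_prod Inl Inl ` (r - Id) :: ('a + 'b) rel"
  let ?R = "map_prod Inr Inr ` (s - Id) :: ('a + 'b) rel"
  let ?LR = "{(Inl a, Inr b) | a b. a \<in> Field r \<and> b \<in> Field s} :: ('a + 'b) rel"
  have "wf ?L" "wf ?R"
    using assms by (auto intro: wf_map_prod_image)
  moreover have "wf ?LR"
    by (rule wf_subset[OF wf_measure[of "case_sum (\<lambda>_. 0) (\<lambda>_. 1)"]]) auto
  ultimately have "wf (?L \<union> (?LR \<union> ?R))"
    by (auto intro!: wf_Un)
  moreover have "ord_sum r s - Id \<subseteq> ?L \<union> (?LR \<union> ?R)"
    unfolding ord_sum_def by force
  ultimately show ?thesis
    using wf_subset by blast
qed

lemma Well_order_ord_sum:
  assumes r: "Well_order r" and s: "Well_order s"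
  shows "Well_order (ord_sum r s)"
proof -
  have rr: "Refl r" "trans r" "antisym r" "Total r" "wf (r - Id)"
    using r by (auto simp: order_on_defs)
  have ss: "Refl s" "trans s" "antisym s" "Total s" "wf (s - Id)"
    using s by (auto simp: order_on_defs)
  have "Refl (ord_sum r s)"
    using rr(1) ss(1) unfolding Field_ord_sum refl_on_def by auto
  moreover have "trans (ord_sum r s)"
  proof (rule transI)
    fix x y z
    assume "(x, y) \<in> ord_sum r s" "(y, z) \<in> ord_sum r s"
    then show "(x, z) \<in> ord_sum r s"
      using rr(2) ss(2) by (cases x; cases y; cases z; simp; meson FieldI1 FieldI2 transD)
  qed
  moreover have "antisym (ord_sum r s)"
  proof (rule antisymI)
    fix x y
    assume "(x, y) \<in> ord_sum r s" "(y, x) \<in> ord_sum r s"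
    then show "x = y"
      using rr(3) ss(3) by (cases x; cases y; simp; meson antisymD)
  qed
  moreover have "Total (ord_sum r s)"
    unfolding total_on_def Field_ord_sum
  proof (intro ballI impI)
    fix x y
    assume "x \<in> Inl ` Field r \<union> Inr ` Field s" "y \<in> Inl ` Field r \<union> Inr ` Field s" "x \<noteq> y"
    then show "(x, y) \<in> ord_sum r s \<or> (y, x) \<in> ord_sum r s"
      using rr(4) ss(4) unfolding total_on_def by (elim UnE imageE) auto
  qed
  ultimately show ?thesis
    using wf_ord_sum_Id[OF rr(5) ss(5)] by (auto simp: order_on_defs intro: FieldI1 FieldI2)
qed

lemma underS_ord_sum_iff [simp]:
  "Inl a \<in> underS (ord_sum r s) (Inl b) \<longleftrightarrow> a \<in> underS r b"
  "Inr c \<in> underS (ord_sum r s) (Inr d) \<longleftrightarrow> c \<in> underS s d"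
  "Inl a \<in> underS (ord_sum r s) (Inr d) \<longleftrightarrow> a \<in> Field r \<and> d \<in> Field s"
  by (auto simp: underS_def)

subsection \<open>Splitting a bad sequence at a cut\<close>

definition cut_height :: "(real \<Rightarrow> real) \<Rightarrow> real set \<Rightarrow> real set \<Rightarrow> real list \<Rightarrow>
    real list set + real list set" where
  "cut_height h A B v = (if filter (\<lambda>x. x \<in> A) v = [] then Inr (vertex_height h B v)
     else Inl (vertex_height h A (filter (\<lambda>x. x \<in> A) v)))"

lemma cut_height_in_Field:
  assumes "ordinal_decreasing h A" "ordinal_decreasing h B"
    and v: "bad_seq h (A \<union> B) v" "v \<noteq> []"
  shows "cut_height h A B v \<in> Field (ord_sum (ord_type h A) (ord_type h B))"
proof (cases "filter (\<lambda>x. x \<in> A) v = []")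
  case True
  then show ?thesis
    using vertex_height_underS_root[OF assms(2) bad_seq_Un_filter_Nil[OF v(1)] v(2)]
    by (simp add: cut_height_def Field_ord_type)
next
  case False
  then show ?thesis
    using vertex_height_underS_root[OF assms(1) bad_seq_Un_filter[OF v(1)]]
    by (simp add: cut_height_def Field_ord_type)
qed

lemma cut_height_descending:
  assumes A: "ordinal_decreasing h A" and B: "ordinal_decreasing h B"
    and cut: "\<forall>x\<in>A. \<forall>y\<in>B. x < y"
    and vy: "bad_seq h (A \<union> B) (v @ [y])" and v: "v \<noteq> []"
  shows "cut_height h A B (v @ [y]) \<in> underS (ord_sum (ord_type h A) (ord_type h B)) (cut_height h A B v)"
proof -
  let ?u = "filter (\<lambda>x. x \<in> A) v"
  have Field_vy: "cut_height h A B (v @ [y]) \<in> Field (ord_sum (ord_type h A) (ord_type h B))"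
    using cut_height_in_Field[OF A B vy] by simp
  have Field_v: "cut_height h A B v \<in> Field (ord_sum (ord_type h A) (ord_type h B))"
    using cut_height_in_Field[OF A B bad_seq_appendD[OF vy] v] .
  consider "y \<in> A" "?u = []" | "y \<in> A" "?u \<noteq> []" | "y \<notin> A"
    by blast
  then show ?thesis
  proof cases
    case 1
    then show ?thesis
      using Field_vy Field_v by (simp add: cut_height_def)
  next
    case 2
    have "bad_seq h A (?u @ [y])"
      using bad_seq_Un_filter[OF vy] 2(1) by simp
    then show ?thesis
      using vertex_height_child_underS[OF A] 2 Field_v
      by (simp add: cut_height_def underS_ord_type)
  next
    case 3
    \<comment> \<open>y lies in B and below every element of v, so v cannot meet A\<close>
    have "y \<in> B" "\<forall>x\<in>set v. y < x"
      using vy 3 by (auto simp: bad_seq_def sorted_wrt_append)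
    then have "?u = []"
      using cut by (fastforce simp: filter_empty_conv)
    moreover have "bad_seq h B (v @ [y])"
      using bad_seq_Un_filter_Nil[OF vy] 3 \<open>?u = []\<close> by simp
    ultimately show ?thesis
      using vertex_height_child_underS[OF B] 3 Field_v
      by (simp add: cut_height_def underS_ord_type)
  qed
qed

theorem lemma7:
  fixes f :: "real \<Rightarrow> real" and J J1 J2 :: "real set"
  assumes "is_interval J" and "ordinal_decreasing f J"
    and "is_interval J1" and "is_interval J2"
    and "J1 \<union> J2 = J" and "J1 \<inter> J2 = {}"
    and "\<forall>x\<in>J1. \<forall>y\<in>J2. x < y"
  shows "(ord_type f J, ord_sum (ord_type f J1) (ord_type f J2)) \<in> ordLeq"
proof -
  have od: "ordinal_decreasing f (J1 \<union> J2)"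
    using assms(2,5) by simp
  have od1: "ordinal_decreasing f J1" and od2: "ordinal_decreasing f J2"
    using ordinal_decreasing_subset[OF od] by auto
  have "ord_type f (J1 \<union> J2) \<le>o ord_sum (ord_type f J1) (ord_type f J2)"
    by (rule ord_type_ordLeq_if_descending_map[OF od
          Well_order_ord_sum[OF Well_order_ord_type Well_order_ord_type]
          cut_height_in_Field[OF od1 od2] cut_height_descending[OF od1 od2 assms(7)]])
  then show ?thesis
    using assms(5) by simp
qed

end
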